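(* Let $\mathcal{H} = \mathcal{H}_{1}\otimes\cdots\otimes\mathcal{H}_{n}$ be a tensor product of finite-dimensional complex Hilbert spaces, let $\ket{\psi}\in\mathcal{H}$ be a unit vector and $\rho=\ket{\psi}\bra{\psi}$. Then for each $k = 1,\dots,n-1$, $$\dim\big(\Omega^k(\rho)\big) = \dim\big(\Omega^{n-k}(\rho)\big).$$
   Context: For $I\subseteq\{1,\dots,n\}$, let $\mathcal{H}_I=\bigotimes_{i\in I}\mathcal{H}_i$ (factors in increasing order), $\rho_I = \mathrm{tr}_{I^C}(\rho)$ the reduced density matrix (partial trace over the complementary factors), and $s_I$ the orthogonal projection of $\mathcal{H}_I$ onto $\mathrm{im}(\rho_I)$ (the support projection). For a linear operator $\mathcal{O}$ on $\mathcal{H}_I$ its restriction is $\mathcal{O}|_{\rho_I} = s_I\mathcal{O}s_I$. For $1\le k\le n$, the space of entanglement $k$-forms is the complex vector space $$\Omega^k(\rho) = \prod_{I\subseteq\{1,\dots,n\},\ |I|=k}\{\, s_I\mathcal{O}s_I \;:\; \mathcal{O}\text{ a linear operator on }\mathcal{H}_I\},$$ i.e. tuples (indexed by the $k$-element subsets, lexicographically ordered) of restricted operators. *)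

theory Defs
  imports Complex_Main "HOL-Library.Function_Algebras"
begin

text \<open>Tensor factors are indexed by 1..n; factor i has dimension d i.
 A basis vector of H_I is a multi-index x :: nat => nat with x i < d i for i in I and
 x i = 0 for i not in I. Vectors of H_I are complex functions on multi-indices vanishing
 outside cfg I; linear operators on H_I are complex matrices indexed by cfg I x cfg I
 (vanishing outside). The order of factors is irrelevant for dimensions.\<close>

type_synonym midx = "nat \<Rightarrow> nat"
type_synonym op = "midx \<Rightarrow> midx \<Rightarrow> complex"

definition cfg :: "(nat \<Rightarrow> nat) \<Rightarrow> nat set \<Rightarrow> midx set" where
  "cfg d I = {x. \<forall>i. (i \<in> I \<longrightarrow> x i < d i) \<and> (i \<notin> I \<longrightarrow> x i = 0)}"

definition merge :: "nat set \<Rightarrow> midx \<Rightarrow> midx \<Rightarrow> midx" where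
  "merge I x z = (\<lambda>i. if i \<in> I then x i else z i)"

definition vecs :: "(nat \<Rightarrow> nat) \<Rightarrow> nat set \<Rightarrow> (midx \<Rightarrow> complex) set" where
  "vecs d I = {v. \<forall>x. x \<notin> cfg d I \<longrightarrow> v x = 0}"

definition ops :: "(nat \<Rightarrow> nat) \<Rightarrow> nat set \<Rightarrow> op set" where
  "ops d I = {A. \<forall>x y. (x \<notin> cfg d I \<or> y \<notin> cfg d I) \<longrightarrow> A x y = 0}"

definition app :: "(nat \<Rightarrow> nat) \<Rightarrow> nat set \<Rightarrow> op \<Rightarrow> (midx \<Rightarrow> complex) \<Rightarrow> (midx \<Rightarrow> complex)" where
  "app d I A v = (\<lambda>x. if x \<in> cfg d I then (\<Sum>y\<in>cfg d I. A x y * v y) else 0)"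

definition mmul :: "(nat \<Rightarrow> nat) \<Rightarrow> nat set \<Rightarrow> op \<Rightarrow> op \<Rightarrow> op" where
  "mmul d I A B = (\<lambda>x y. if x \<in> cfg d I \<and> y \<in> cfg d I
      then (\<Sum>z\<in>cfg d I. A x z * B z y) else 0)"

definition inner_I :: "(nat \<Rightarrow> nat) \<Rightarrow> nat set \<Rightarrow> (midx \<Rightarrow> complex) \<Rightarrow> (midx \<Rightarrow> complex) \<Rightarrow> complex" where
  "inner_I d I v w = (\<Sum>x\<in>cfg d I. cnj (v x) * w x)"

definition img :: "(nat \<Rightarrow> nat) \<Rightarrow> nat set \<Rightarrow> op \<Rightarrow> (midx \<Rightarrow> complex) set" where
  "img d I A = app d I A ` vecs d I"

definition orth_proj :: "(nat \<Rightarrow> nat) \<Rightarrow> nat set \<Rightarrow> (midx \<Rightarrow> complex) set \<Rightarrow> op" where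
  "orth_proj d I W = (THE P. P \<in> ops d I \<and>
     (\<forall>v\<in>vecs d I. app d I P v \<in> W \<and> (\<forall>w\<in>W. inner_I d I w (v - app d I P v) = 0)))"

definition ptrace :: "nat \<Rightarrow> (nat \<Rightarrow> nat) \<Rightarrow> nat set \<Rightarrow> op \<Rightarrow> op" where
  "ptrace n d I R = (\<lambda>x y. if x \<in> cfg d I \<and> y \<in> cfg d I
      then (\<Sum>z\<in>cfg d ({1..n} - I). R (merge I x z) (merge I y z)) else 0)"

definition pure_state :: "(midx \<Rightarrow> complex) \<Rightarrow> op" where
  "pure_state psi = (\<lambda>a b. psi a * cnj (psi b))"

definition supp_proj :: "nat \<Rightarrow> (nat \<Rightarrow> nat) \<Rightarrow> op \<Rightarrow> nat set \<Rightarrow> op" where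
  "supp_proj n d rho I = orth_proj d I (img d I (ptrace n d I rho))"

definition restrict_op :: "nat \<Rightarrow> (nat \<Rightarrow> nat) \<Rightarrow> op \<Rightarrow> nat set \<Rightarrow> op \<Rightarrow> op" where
  "restrict_op n d rho I B =
     mmul d I (mmul d I (supp_proj n d rho I) B) (supp_proj n d rho I)"

definition Omega :: "nat \<Rightarrow> (nat \<Rightarrow> nat) \<Rightarrow> op \<Rightarrow> nat \<Rightarrow> (nat set \<Rightarrow> op) set" where
  "Omega n d rho k = {F. \<forall>I.
     (I \<subseteq> {1..n} \<and> card I = k \<longrightarrow> (\<exists>B \<in> ops d I. F I = restrict_op n d rho I B)) \<and>
     (\<not> (I \<subseteq> {1..n} \<and> card I = k) \<longrightarrow> F I = (\<lambda>x y. 0))}"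

definition cscale :: "complex \<Rightarrow> (nat set \<Rightarrow> op) \<Rightarrow> (nat set \<Rightarrow> op)" where
  "cscale c F = (\<lambda>I x y. c * F I x y)"

definition cdim :: "(nat set \<Rightarrow> op) set \<Rightarrow> nat" where
  "cdim V = vector_space.dim cscale V"

end

theory Submission
  imports Defs
begin

text \<open>Fix a set \<open>I\<close> of \<open>k\<close> tensor factors with complement \<open>J\<close>, and read \<open>\<psi>\<close> as the
  matrix \<open>M\<close> with entries \<open>\<psi>(x, z)\<close>, \<open>x\<close> a basis index of \<open>H\<^sub>I\<close> and \<open>z\<close> one of \<open>H\<^sub>J\<close>.
  Then \<open>\<rho>\<^sub>I = M M\<^sup>*\<close> and \<open>\<rho>\<^sub>J = M\<^sup>T conj(M)\<close>, so \<open>im \<rho>\<^sub>I\<close> and \<open>im \<rho>\<^sub>J\<close> are the column spans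
  of \<open>M\<close> and \<open>M\<^sup>T\<close>. The map \<open>A \<mapsto> M\<^sup>T A\<^sup>T conj(M)\<close> therefore sends every operator on
  \<open>H\<^sub>I\<close> to an operator already restricted to \<open>im \<rho>\<^sub>J\<close>, and it is injective on operators
  restricted to \<open>im \<rho>\<^sub>I\<close>, because the columns of \<open>s\<^sub>I\<close> lie in the column span of \<open>M\<close>.
  Doing this for every \<open>k\<close>-subset \<open>I\<close> gives an injective linear map
  \<open>\<Omega>\<^sup>k(\<rho>) \<rightarrow> \<Omega>\<^bsup>n - k\<^esup>(\<rho>)\<close>; the same argument for \<open>n - k\<close> gives the reverse inequality.\<close>

section \<open>Matrices indexed by finite sets\<close>

definition apply_on :: "'a set \<Rightarrow> ('a \<Rightarrow> 'a \<Rightarrow> complex) \<Rightarrow> ('a \<Rightarrow> complex) \<Rightarrow> 'a \<Rightarrow> complex" where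
  "apply_on C A v = (\<lambda>x. if x \<in> C then (\<Sum>y\<in>C. A x y * v y) else 0)"

definition inner_on :: "'a set \<Rightarrow> ('a \<Rightarrow> complex) \<Rightarrow> ('a \<Rightarrow> complex) \<Rightarrow> complex" where
  "inner_on C v w = (\<Sum>x\<in>C. cnj (v x) * w x)"

definition vecs_on :: "'a set \<Rightarrow> ('a \<Rightarrow> complex) set" where
  "vecs_on C = {v. \<forall>x. x \<notin> C \<longrightarrow> v x = 0}"

definition ops_on :: "'a set \<Rightarrow> ('a \<Rightarrow> 'a \<Rightarrow> complex) set" where
  "ops_on C = {A. \<forall>x y. (x \<notin> C \<or> y \<notin> C) \<longrightarrow> A x y = 0}"

definition col_span :: "'a set \<Rightarrow> ('a \<Rightarrow> 'b \<Rightarrow> complex) \<Rightarrow> 'b set \<Rightarrow> ('a \<Rightarrow> complex) set" where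
  "col_span C R Y = range (\<lambda>c x. if x \<in> C then (\<Sum>y\<in>Y. R x y * c y) else 0)"

definition column :: "'a set \<Rightarrow> ('a \<Rightarrow> 'b \<Rightarrow> complex) \<Rightarrow> 'b \<Rightarrow> 'a \<Rightarrow> complex" where
  "column C R y = (\<lambda>x. if x \<in> C then R x y else 0)"

definition basis_vec :: "'a \<Rightarrow> 'a \<Rightarrow> complex" where
  "basis_vec y = (\<lambda>z. if z = y then 1 else 0)"

lemma inner_on_add_left: "inner_on C (v + w) u = inner_on C v u + inner_on C w u"
  by (simp add: inner_on_def distrib_right sum.distrib)

lemma inner_on_diff_right: "inner_on C u (v - w) = inner_on C u v - inner_on C u w"
  by (simp add: inner_on_def right_diff_distrib sum_subtractf)

lemma inner_on_scale_left: "inner_on C (\<lambda>x. c * v x) u = cnj c * inner_on C v u"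
  by (simp add: inner_on_def sum_distrib_left mult.assoc)

lemma inner_on_scale_right: "inner_on C u (\<lambda>x. c * v x) = c * inner_on C u v"
  by (simp add: inner_on_def sum_distrib_left mult_ac)

lemma inner_on_commute: "inner_on C u v = cnj (inner_on C v u)"
  by (simp add: inner_on_def mult.commute)

lemma inner_on_self_eq_0D:
  assumes "finite C" "inner_on C v v = 0" "x \<in> C" shows "v x = 0"
proof -
  have "cnj (v y) * v y = complex_of_real ((cmod (v y))\<^sup>2)" for y
    by (metis complex_norm_square mult.commute)
  then have "inner_on C v v = complex_of_real (\<Sum>y\<in>C. (cmod (v y))\<^sup>2)"
    by (simp only: inner_on_def of_real_sum)
  then have "(\<Sum>y\<in>C. (cmod (v y))\<^sup>2) = 0"
    using assms(2) by (metis of_real_eq_0_iff)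
  then have "\<forall>y\<in>C. (cmod (v y))\<^sup>2 = 0"
    using assms(1) by (subst (asm) sum_nonneg_eq_0_iff) auto
  then show ?thesis using assms(3) by simp
qed

lemma inner_on_self_eq_0_vecs_on:
  assumes "finite C" "v \<in> vecs_on C" "inner_on C v v = 0" shows "v = 0"
  using assms inner_on_self_eq_0D[of C v] by (auto simp: vecs_on_def fun_eq_iff)

lemma col_span_subset_vecs_on: "col_span C R Y \<subseteq> vecs_on C"
  by (auto simp: col_span_def vecs_on_def)

lemma apply_on_in_col_span: "apply_on C R v \<in> col_span C R C"
  by (auto simp: col_span_def apply_on_def)

lemma col_span_add:
  assumes "u \<in> col_span C R Y" "w \<in> col_span C R Y" shows "u + w \<in> col_span C R Y"
proof -
  obtain a b where "u = (\<lambda>x. if x \<in> C then (\<Sum>y\<in>Y. R x y * a y) else 0)"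
    "w = (\<lambda>x. if x \<in> C then (\<Sum>y\<in>Y. R x y * b y) else 0)"
    using assms by (auto simp: col_span_def)
  then have "u + w = (\<lambda>x. if x \<in> C then (\<Sum>y\<in>Y. R x y * (a y + b y)) else 0)"
    by (simp add: fun_eq_iff distrib_left sum.distrib)
  then show ?thesis by (simp add: col_span_def)
qed

lemma col_span_scale:
  assumes "u \<in> col_span C R Y" shows "(\<lambda>x. a * u x) \<in> col_span C R Y"
proof -
  obtain b where "u = (\<lambda>x. if x \<in> C then (\<Sum>y\<in>Y. R x y * b y) else 0)"
    using assms by (auto simp: col_span_def)
  then have "(\<lambda>x. a * u x) = (\<lambda>x. if x \<in> C then (\<Sum>y\<in>Y. R x y * (a * b y)) else 0)"
    by (simp add: fun_eq_iff sum_distrib_left mult_ac)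
  then show ?thesis by (simp add: col_span_def)
qed

lemma col_span_diff:
  assumes "u \<in> col_span C R Y" "w \<in> col_span C R Y" shows "u - w \<in> col_span C R Y"
proof -
  have "u - w = u + (\<lambda>x. (-1) * w x)" by (simp add: fun_eq_iff)
  then show ?thesis using assms col_span_add col_span_scale by metis
qed

lemma col_span_mono:
  assumes "Y \<subseteq> Y'" "finite Y'" shows "col_span C R Y \<subseteq> col_span C R Y'"
proof
  fix u assume "u \<in> col_span C R Y"
  then obtain c where u: "u = (\<lambda>x. if x \<in> C then (\<Sum>y\<in>Y. R x y * c y) else 0)"
    by (auto simp: col_span_def)
  have "(\<Sum>y\<in>Y'. R x y * (if y \<in> Y then c y else 0)) = (\<Sum>y\<in>Y. R x y * c y)" for x
    using assms by (intro sum.mono_neutral_cong_right) auto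
  then have "u = (\<lambda>x. if x \<in> C then (\<Sum>y\<in>Y'. R x y * (if y \<in> Y then c y else 0)) else 0)"
    by (simp only: u)
  then show "u \<in> col_span C R Y'" by (simp add: col_span_def)
qed

lemma column_in_col_span:
  assumes "y \<in> Y" "finite Y" shows "column C R y \<in> col_span C R Y"
proof -
  have "column C R y = (\<lambda>x. if x \<in> C then (\<Sum>y'\<in>Y. R x y' * (if y' = y then 1 else 0)) else 0)"
    using assms by (simp add: column_def fun_eq_iff if_distrib[of "(*) _"] cong: if_cong)
  then show ?thesis by (simp add: col_span_def)
qed

lemma col_span_insert_decomp:
  assumes "finite Y" "y \<notin> Y" "w \<in> col_span C R (insert y Y)"
  obtains w0 a where "w0 \<in> col_span C R Y" "w = w0 + (\<lambda>x. a * column C R y x)"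
proof -
  obtain c where w: "w = (\<lambda>x. if x \<in> C then (\<Sum>y'\<in>insert y Y. R x y' * c y') else 0)"
    using assms(3) by (auto simp: col_span_def)
  let ?w0 = "\<lambda>x. if x \<in> C then (\<Sum>y'\<in>Y. R x y' * c y') else 0"
  have "w = ?w0 + (\<lambda>x. c y * column C R y x)"
    using assms(1,2) by (simp add: w column_def fun_eq_iff)
  moreover have "?w0 \<in> col_span C R Y" by (simp add: col_span_def)
  ultimately show ?thesis using that by blast
qed

lemma col_span_insert:
  assumes "finite Y" "y \<notin> Y" "v \<in> col_span C R Y"
  shows "col_span C R (insert y Y) = {w + (\<lambda>x. a * (column C R y - v) x) | w a. w \<in> col_span C R Y}"
proof (intro equalityI subsetI)
  fix w' assume "w' \<in> col_span C R (insert y Y)"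
  then obtain w0 a where w0: "w0 \<in> col_span C R Y" and w': "w' = w0 + (\<lambda>x. a * column C R y x)"
    by (rule col_span_insert_decomp[OF assms(1,2)])
  have "w0 + (\<lambda>x. a * v x) \<in> col_span C R Y"
    using w0 assms(3) by (intro col_span_add col_span_scale)
  moreover have "w' = (w0 + (\<lambda>x. a * v x)) + (\<lambda>x. a * (column C R y - v) x)"
    by (simp add: w' fun_eq_iff algebra_simps)
  ultimately show "w' \<in> {w + (\<lambda>x. a * (column C R y - v) x) | w a. w \<in> col_span C R Y}"
    by blast
next
  fix w' assume "w' \<in> {w + (\<lambda>x. a * (column C R y - v) x) | w a. w \<in> col_span C R Y}"
  then obtain w a where w: "w \<in> col_span C R Y" and w': "w' = w + (\<lambda>x. a * (column C R y - v) x)"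
    by blast
  have sub: "col_span C R Y \<subseteq> col_span C R (insert y Y)"
    using assms(1) by (intro col_span_mono) auto
  have "column C R y \<in> col_span C R (insert y Y)"
    using assms(1) by (intro column_in_col_span) auto
  then have "column C R y - v \<in> col_span C R (insert y Y)"
    using sub assms(3) by (intro col_span_diff) auto
  then have "(\<lambda>x. a * (column C R y - v) x) \<in> col_span C R (insert y Y)"
    by (rule col_span_scale)
  then show "w' \<in> col_span C R (insert y Y)"
    unfolding w' using w sub by (intro col_span_add) auto
qed

lemma col_span_self_eq_range: "col_span C R C = apply_on C R ` vecs_on C"
proof (intro equalityI subsetI)
  fix u assume "u \<in> col_span C R C"
  then obtain c where "u = (\<lambda>x. if x \<in> C then (\<Sum>y\<in>C. R x y * c y) else 0)"
    by (auto simp: col_span_def)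
  then have "u = apply_on C R (\<lambda>y. if y \<in> C then c y else 0)"
    by (auto simp: apply_on_def fun_eq_iff intro!: sum.cong)
  then show "u \<in> apply_on C R ` vecs_on C" by (auto simp: vecs_on_def)
qed (auto simp: col_span_def apply_on_def)

lemma basis_vec_in_vecs_on: "y \<in> C \<Longrightarrow> basis_vec y \<in> vecs_on C"
  by (simp add: basis_vec_def vecs_on_def)

lemma apply_on_basis_vec:
  "finite C \<Longrightarrow> y \<in> C \<Longrightarrow> apply_on C A (basis_vec y) = column C A y"
  by (simp add: apply_on_def column_def basis_vec_def fun_eq_iff if_distrib[of "(*) _"] cong: if_cong)

lemma inner_on_basis_vec:
  "finite C \<Longrightarrow> y \<in> C \<Longrightarrow> inner_on C u (basis_vec y) = cnj (u y)"
  by (simp add: inner_on_def basis_vec_def if_distrib[of "(*) _"] cong: if_cong)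

lemma ops_on_eqI:
  assumes "finite C" "P \<in> ops_on C" "Q \<in> ops_on C"
    and "\<And>v. v \<in> vecs_on C \<Longrightarrow> apply_on C P v = apply_on C Q v"
  shows "P = Q"
proof (intro ext)
  fix x y
  show "P x y = Q x y"
  proof (cases "x \<in> C \<and> y \<in> C")
    case True
    then have "column C P y x = column C Q y x"
      using assms(1,4) basis_vec_in_vecs_on[of y C] by (simp flip: apply_on_basis_vec)
    then show ?thesis using True by (simp add: column_def)
  qed (use assms(2,3) in \<open>auto simp: ops_on_def\<close>)
qed

lemma sum_sandwich_reassoc:
  "(\<Sum>z1\<in>Z1. \<Sum>z2\<in>Z2. f z1 * (\<Sum>x\<in>X. \<Sum>x'\<in>X'. g z1 x * h x x' * k x' z2) * l z2)
     = (\<Sum>x\<in>X. \<Sum>x'\<in>X'. (\<Sum>z1\<in>Z1. f z1 * g z1 x) * h x x' * (\<Sum>z2\<in>Z2. k x' z2 * l z2))"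
    for f l :: "_ \<Rightarrow> 'a::comm_semiring_0"
proof -
  have "(\<Sum>z1\<in>Z1. \<Sum>z2\<in>Z2. f z1 * (\<Sum>x\<in>X. \<Sum>x'\<in>X'. g z1 x * h x x' * k x' z2) * l z2)
      = (\<Sum>z1\<in>Z1. \<Sum>z2\<in>Z2. \<Sum>x\<in>X. \<Sum>x'\<in>X'. f z1 * g z1 x * h x x' * k x' z2 * l z2)"
    by (simp add: sum_distrib_left sum_distrib_right mult.assoc)
  also have "\<dots> = (\<Sum>z1\<in>Z1. \<Sum>x\<in>X. \<Sum>x'\<in>X'. \<Sum>z2\<in>Z2. f z1 * g z1 x * h x x' * k x' z2 * l z2)"
    by (intro sum.cong refl, subst sum.swap, intro sum.cong refl, rule sum.swap)
  also have "\<dots> = (\<Sum>x\<in>X. \<Sum>x'\<in>X'. \<Sum>z1\<in>Z1. \<Sum>z2\<in>Z2. f z1 * g z1 x * h x x' * k x' z2 * l z2)"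
    by (subst sum.swap, intro sum.cong refl, rule sum.swap)
  also have "\<dots> = (\<Sum>x\<in>X. \<Sum>x'\<in>X'. (\<Sum>z1\<in>Z1. f z1 * g z1 x) * h x x' * (\<Sum>z2\<in>Z2. k x' z2 * l z2))"
    unfolding sum_distrib_right[of "\<lambda>z1. f z1 * g z1 _" Z1] sum_product by (simp only: mult.assoc)
  finally show ?thesis .
qed

section \<open>Orthogonal projections onto column spans\<close>

definition is_orth_proj :: "'a set \<Rightarrow> ('a \<Rightarrow> complex) set \<Rightarrow> ('a \<Rightarrow> 'a \<Rightarrow> complex) \<Rightarrow> bool" where
  "is_orth_proj C W P \<longleftrightarrow> P \<in> ops_on C \<and>
     (\<forall>v\<in>vecs_on C. apply_on C P v \<in> W \<and> (\<forall>w\<in>W. inner_on C w (v - apply_on C P v) = 0))"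

lemma apply_on_rank_one_update:
  assumes "u \<in> vecs_on C"
  shows "apply_on C (\<lambda>x y. P x y + u x * cnj (u y) / c) v
           = apply_on C P v + (\<lambda>x. (inner_on C u v / c) * u x)"
proof
  fix x
  have "(\<Sum>y\<in>C. (P x y + u x * cnj (u y) / c) * v y)
      = (\<Sum>y\<in>C. P x y * v y + u x / c * (cnj (u y) * v y))"
    by (intro sum.cong refl) (simp add: divide_inverse algebra_simps)
  also have "\<dots> = (\<Sum>y\<in>C. P x y * v y) + u x / c * inner_on C u v"
    by (simp add: sum.distrib inner_on_def sum_distrib_left)
  finally have "(\<Sum>y\<in>C. (P x y + u x * cnj (u y) / c) * v y)
      = (\<Sum>y\<in>C. P x y * v y) + inner_on C u v / c * u x"
    by simp
  then show "apply_on C (\<lambda>x y. P x y + u x * cnj (u y) / c) v x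
      = (apply_on C P v + (\<lambda>x. (inner_on C u v / c) * u x)) x"
    using assms by (auto simp: apply_on_def vecs_on_def)
qed

lemma is_orth_proj_extend:
  assumes P: "is_orth_proj C W P" and u: "u \<in> vecs_on C"
    and perp: "\<forall>w\<in>W. inner_on C w u = 0" and nz: "inner_on C u u \<noteq> 0"
  shows "is_orth_proj C {w + (\<lambda>x. a * u x) | w a. w \<in> W}
           (\<lambda>x y. P x y + u x * cnj (u y) / inner_on C u u)" (is "is_orth_proj C ?W' ?P'")
proof -
  let ?nrm = "inner_on C u u"
  have P_ops: "P \<in> ops_on C" and P_in: "\<And>v. v \<in> vecs_on C \<Longrightarrow> apply_on C P v \<in> W"
    and P_perp: "\<And>v w. v \<in> vecs_on C \<Longrightarrow> w \<in> W \<Longrightarrow> inner_on C w (v - apply_on C P v) = 0"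
    using P by (auto simp: is_orth_proj_def)
  have apply_P': "apply_on C ?P' v = apply_on C P v + (\<lambda>x. (inner_on C u v / ?nrm) * u x)" for v
    by (rule apply_on_rank_one_update[OF u])
  have "?P' \<in> ops_on C" using P_ops u by (auto simp: ops_on_def vecs_on_def)
  moreover have "apply_on C ?P' v \<in> ?W'" if "v \<in> vecs_on C" for v
    unfolding apply_P' using P_in[OF that] by blast
  moreover have "inner_on C w' (v - apply_on C ?P' v) = 0" if v: "v \<in> vecs_on C" and "w' \<in> ?W'" for v w'
  proof -
    obtain w a where w: "w \<in> W" and w': "w' = w + (\<lambda>x. a * u x)" using \<open>w' \<in> ?W'\<close> by blast
    define \<alpha> where "\<alpha> = inner_on C u v / ?nrm"
    have vv: "v - apply_on C ?P' v = (v - apply_on C P v) - (\<lambda>x. \<alpha> * u x)"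
      by (simp add: apply_P' \<alpha>_def fun_eq_iff)
    have "inner_on C w' (v - apply_on C ?P' v)
        = inner_on C w (v - apply_on C P v) - \<alpha> * inner_on C w u
          + cnj a * (inner_on C u v - inner_on C u (apply_on C P v) - \<alpha> * ?nrm)"
      unfolding w' vv
      by (simp only: inner_on_add_left inner_on_scale_left inner_on_diff_right inner_on_scale_right)
        (simp add: algebra_simps)
    also have "\<dots> = 0"
      using P_perp[OF v w] perp w P_in[OF v] inner_on_commute[of C u "apply_on C P v"] nz by (simp add: \<alpha>_def)
    finally show ?thesis .
  qed
  ultimately show ?thesis by (simp add: is_orth_proj_def)
qed

lemma orth_proj_col_span_exists:
  assumes "finite C" "finite Y" shows "\<exists>P. is_orth_proj C (col_span C R Y) P"
  using assms(2)
proof (induction Y rule: finite_induct)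
  case empty
  have "col_span C R {} = {0}" by (auto simp: col_span_def fun_eq_iff)
  then have "is_orth_proj C (col_span C R {}) (\<lambda>x y. 0)"
    by (simp add: is_orth_proj_def ops_on_def apply_on_def inner_on_def fun_eq_iff)
  then show ?case by blast
next
  case (insert y Y)
  obtain P where P: "is_orth_proj C (col_span C R Y) P" using insert.IH ..
  let ?c = "column C R y"
  define u where "u = ?c - apply_on C P ?c"
  have c: "?c \<in> vecs_on C" by (simp add: column_def vecs_on_def)
  then have Pc: "apply_on C P ?c \<in> col_span C R Y" using P by (simp add: is_orth_proj_def)
  have u: "u \<in> vecs_on C" by (simp add: u_def vecs_on_def column_def apply_on_def)
  have perp: "\<forall>w\<in>col_span C R Y. inner_on C w u = 0"
    using P c by (simp add: is_orth_proj_def u_def)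
  have span: "col_span C R (insert y Y) = {w + (\<lambda>x. a * u x) | w a. w \<in> col_span C R Y}"
    unfolding u_def by (rule col_span_insert[OF insert.hyps Pc])
  show ?case
  proof (cases "inner_on C u u = 0")
    case True
    then have "u = 0" using inner_on_self_eq_0_vecs_on[OF assms(1) u] by simp
    then have "w + (\<lambda>x. a * u x) = w" for w a by (simp add: fun_eq_iff)
    then have "col_span C R (insert y Y) = col_span C R Y" by (simp add: span)
    then show ?thesis using P by auto
  next
    case False
    show ?thesis unfolding span using is_orth_proj_extend[OF P u perp False] by blast
  qed
qed

lemma is_orth_proj_fixes:
  assumes "finite C" and P: "is_orth_proj C (col_span C R Y) P" and w: "w \<in> col_span C R Y"
  shows "apply_on C P w = w"
proof -
  have "w \<in> vecs_on C" using w col_span_subset_vecs_on by blast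
  then have Pw: "apply_on C P w \<in> col_span C R Y"
    and perp: "\<And>t. t \<in> col_span C R Y \<Longrightarrow> inner_on C t (w - apply_on C P w) = 0"
    using P by (auto simp: is_orth_proj_def)
  have t: "w - apply_on C P w \<in> col_span C R Y" using w Pw by (rule col_span_diff)
  have "inner_on C (w - apply_on C P w) (w - apply_on C P w) = 0" by (rule perp[OF t])
  then have "w - apply_on C P w = 0"
    using t col_span_subset_vecs_on by (intro inner_on_self_eq_0_vecs_on[OF assms(1)]) auto
  then show ?thesis by simp
qed

lemma is_orth_proj_unique:
  assumes "finite C"
    and P: "is_orth_proj C (col_span C R Y) P" and Q: "is_orth_proj C (col_span C R Y) Q"
  shows "P = Q"
proof (rule ops_on_eqI[OF assms(1)])
  show "P \<in> ops_on C" "Q \<in> ops_on C" using P Q by (simp_all add: is_orth_proj_def)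
next
  fix e assume e: "e \<in> vecs_on C"
  let ?t = "apply_on C P e - apply_on C Q e"
  have t: "?t \<in> col_span C R Y"
    using P Q e by (intro col_span_diff) (auto simp: is_orth_proj_def)
  then have "inner_on C ?t (e - apply_on C Q e) = 0" "inner_on C ?t (e - apply_on C P e) = 0"
    using P Q e by (auto simp: is_orth_proj_def)
  then have "inner_on C ?t ((e - apply_on C Q e) - (e - apply_on C P e)) = 0"
    by (simp only: inner_on_diff_right) simp
  then have "inner_on C ?t ?t = 0" by simp
  then have "?t = 0"
    using t col_span_subset_vecs_on by (intro inner_on_self_eq_0_vecs_on[OF assms(1)]) auto
  then show "apply_on C P e = apply_on C Q e" by simp
qed

lemma is_orth_proj_hermitian:
  assumes "finite C" and P: "is_orth_proj C (col_span C R Y) P"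
  shows "P x y = cnj (P y x)"
proof (cases "x \<in> C \<and> y \<in> C")
  case True
  let ?a = "apply_on C P (basis_vec x)" and ?b = "apply_on C P (basis_vec y)"
  have "basis_vec x \<in> vecs_on C" "basis_vec y \<in> vecs_on C"
    using True by (simp_all add: basis_vec_in_vecs_on)
  then have "inner_on C ?a (basis_vec y - ?b) = 0" "inner_on C ?b (basis_vec x - ?a) = 0"
    using P by (auto simp: is_orth_proj_def)
  then have "inner_on C ?a (basis_vec y) = inner_on C ?a ?b"
    "inner_on C ?b (basis_vec x) = cnj (inner_on C ?a ?b)"
    using inner_on_commute[of C ?b ?a] by (simp_all add: inner_on_diff_right)
  then show ?thesis
    using True assms(1) by (simp add: inner_on_basis_vec apply_on_basis_vec column_def)
qed (use P in \<open>auto simp: is_orth_proj_def ops_on_def\<close>)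

lemma is_orth_proj_idem:
  assumes "finite C" and P: "is_orth_proj C (col_span C R Y) P"
  shows "(\<Sum>z\<in>C. P x z * P z y) = P x y"
proof (cases "x \<in> C \<and> y \<in> C")
  case True
  have "column C P y \<in> col_span C R Y"
    using P True assms(1) basis_vec_in_vecs_on[of y C]
    by (auto simp: is_orth_proj_def simp flip: apply_on_basis_vec)
  then have "apply_on C P (column C P y) x = column C P y x"
    using is_orth_proj_fixes[OF assms] by simp
  then show ?thesis using True by (simp add: apply_on_def column_def cong: sum.cong)
qed (use P in \<open>auto simp: is_orth_proj_def ops_on_def\<close>)

lemma is_orth_proj_The:
  assumes "finite C" "finite Y"
  shows "is_orth_proj C (col_span C R Y) (THE P. is_orth_proj C (col_span C R Y) P)"
proof -
  obtain P where P: "is_orth_proj C (col_span C R Y) P"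
    using orth_proj_col_span_exists[OF assms] by blast
  show ?thesis
  proof (rule theI[of _ P])
    fix Q assume "is_orth_proj C (col_span C R Y) Q"
    then show "Q = P" using is_orth_proj_unique[OF assms(1) _ P] by simp
  qed (rule P)
qed

definition gram :: "'a set \<Rightarrow> 'b set \<Rightarrow> ('a \<Rightarrow> 'b \<Rightarrow> complex) \<Rightarrow> 'a \<Rightarrow> 'a \<Rightarrow> complex" where
  "gram C D L = (\<lambda>c c'. if c \<in> C \<and> c' \<in> C then (\<Sum>e\<in>D. L c e * cnj (L c' e)) else 0)"

lemma col_span_gram:
  assumes "w \<in> col_span C (gram C D L) C"
  shows "\<exists>a. \<forall>c\<in>C. w c = (\<Sum>e\<in>D. L c e * a e)"
proof -
  obtain b where w: "w = (\<lambda>x. if x \<in> C then (\<Sum>c'\<in>C. gram C D L x c' * b c') else 0)"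
    using assms by (auto simp: col_span_def)
  have "\<forall>c\<in>C. w c = (\<Sum>e\<in>D. L c e * (\<Sum>c'\<in>C. cnj (L c' e) * b c'))"
  proof
    fix c assume "c \<in> C"
    then have "w c = (\<Sum>c'\<in>C. (\<Sum>e\<in>D. L c e * cnj (L c' e)) * b c')"
      by (simp add: w gram_def)
    also have "\<dots> = (\<Sum>e\<in>D. L c e * (\<Sum>c'\<in>C. cnj (L c' e) * b c'))"
      by (simp add: sum_distrib_left sum_distrib_right mult.assoc) (rule sum.swap)
    finally show "w c = (\<Sum>e\<in>D. L c e * (\<Sum>c'\<in>C. cnj (L c' e) * b c'))" .
  qed
  then show ?thesis by (rule exI[of _ "\<lambda>e. \<Sum>c'\<in>C. cnj (L c' e) * b c'"])
qed

lemma inner_on_apply_gram: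
  "inner_on C (apply_on C (gram C D L) t) t
     = inner_on D (\<lambda>e. \<Sum>c\<in>C. cnj (L c e) * t c) (\<lambda>e. \<Sum>c\<in>C. cnj (L c e) * t c)"
proof -
  have "inner_on C (apply_on C (gram C D L) t) t
      = (\<Sum>c\<in>C. cnj (\<Sum>c'\<in>C. (\<Sum>e\<in>D. L c e * cnj (L c' e)) * t c') * t c)"
    by (simp add: inner_on_def apply_on_def gram_def)
  also have "\<dots> = (\<Sum>c\<in>C. \<Sum>c'\<in>C. \<Sum>e\<in>D. (cnj (L c e) * t c) * (L c' e * cnj (t c')))"
    by (simp add: sum_distrib_left sum_distrib_right mult_ac)
  also have "\<dots> = (\<Sum>e\<in>D. \<Sum>c'\<in>C. \<Sum>c\<in>C. (cnj (L c e) * t c) * (L c' e * cnj (t c')))"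
    by (subst sum.swap, subst (1 2) sum.swap) (rule refl)
  also have "\<dots> = inner_on D (\<lambda>e. \<Sum>c\<in>C. cnj (L c e) * t c) (\<lambda>e. \<Sum>c\<in>C. cnj (L c e) * t c)"
    by (simp add: inner_on_def sum_distrib_left sum_distrib_right mult_ac)
  finally show ?thesis .
qed

text \<open>The residual \<open>t\<close> is orthogonal to the range of \<open>L L\<^sup>*\<close>, which forces \<open>L\<^sup>* t = 0\<close>;
  hence \<open>t\<close> is orthogonal to every column of \<open>L\<close>, in particular to the one it came from.\<close>

lemma is_orth_proj_gram_fixes_columns:
  assumes fin: "finite C" "finite D"
    and P: "is_orth_proj C (col_span C (gram C D L) C) P" and "e0 \<in> D" "c \<in> C"
  shows "(\<Sum>c'\<in>C. P c c' * L c' e0) = L c e0"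
proof -
  let ?v = "column C L e0"
  define t where "t = ?v - apply_on C P ?v"
  have v: "?v \<in> vecs_on C" by (simp add: column_def vecs_on_def)
  then have t: "t \<in> vecs_on C" by (simp add: t_def vecs_on_def apply_on_def column_def)
  have Pv: "apply_on C P ?v \<in> col_span C (gram C D L) C"
    and perp: "\<And>w. w \<in> col_span C (gram C D L) C \<Longrightarrow> inner_on C w t = 0"
    using P v by (auto simp: is_orth_proj_def t_def)
  define g where "g = (\<lambda>e. \<Sum>c\<in>C. cnj (L c e) * t c)"
  have "inner_on D g g = 0"
    using perp[OF apply_on_in_col_span] by (simp add: g_def flip: inner_on_apply_gram)
  then have "g e0 = 0" using inner_on_self_eq_0D[OF fin(2)] \<open>e0 \<in> D\<close> by blast
  moreover have "inner_on C t ?v = cnj (g e0)"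
    by (simp add: inner_on_def g_def column_def mult.commute cong: sum.cong)
  moreover have "inner_on C t (apply_on C P ?v) = 0"
    using perp[OF Pv] inner_on_commute[of C t "apply_on C P ?v"] by simp
  ultimately have "inner_on C t t = 0" by (simp add: t_def inner_on_diff_right)
  then have "t = 0" by (rule inner_on_self_eq_0_vecs_on[OF fin(1) t, rotated])
  then have "apply_on C P ?v c = ?v c" by (simp add: t_def)
  then show ?thesis
    using \<open>c \<in> C\<close> by (simp add: apply_on_def column_def if_distrib[of "(*) _"] cong: sum.cong if_cong)
qed

section \<open>Reduced states of a pure state\<close>

lemma finite_cfg:
  assumes "finite I" shows "finite (cfg d I)"
proof -
  let ?S = "{f. \<forall>i. (i \<in> I \<longrightarrow> f i \<in> {..<sum d I}) \<and> (i \<notin> I \<longrightarrow> f i = (0::nat))}"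
  have "cfg d I \<subseteq> ?S"
    using assms by (fastforce simp: cfg_def intro: less_le_trans member_le_sum)
  moreover have "finite ?S" by (rule finite_set_of_finite_funs) (use assms in auto)
  ultimately show ?thesis by (rule finite_subset)
qed

lemma app_eq_apply_on: "app d I = apply_on (cfg d I)"
  by (simp add: fun_eq_iff app_def apply_on_def)

lemma orth_proj_eq_The: "orth_proj d I W = (THE P. is_orth_proj (cfg d I) W P)"
  by (simp add: orth_proj_def is_orth_proj_def app_eq_apply_on fun_eq_iff inner_I_def inner_on_def
      vecs_def vecs_on_def ops_def ops_on_def)

lemma img_eq_col_span: "img d I R = col_span (cfg d I) R (cfg d I)"
  by (simp add: img_def app_eq_apply_on col_span_self_eq_range vecs_def vecs_on_def)

lemma is_orth_proj_supp_proj: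
  assumes "finite I"
  shows "is_orth_proj (cfg d I) (col_span (cfg d I) (ptrace n d I rho) (cfg d I)) (supp_proj n d rho I)"
  unfolding supp_proj_def orth_proj_eq_The img_eq_col_span
  by (rule is_orth_proj_The) (simp_all add: finite_cfg assms)

definition bipart_matrix :: "(midx \<Rightarrow> complex) \<Rightarrow> nat set \<Rightarrow> midx \<Rightarrow> midx \<Rightarrow> complex" where
  "bipart_matrix psi I x z = psi (merge I x z)"

lemma merge_swap:
  assumes "x \<in> cfg d I" "z \<in> cfg d J" "I \<inter> J = {}"
  shows "merge J z x = merge I x z"
  using assms by (auto simp: merge_def cfg_def fun_eq_iff)

lemma ptrace_pure_state:
  "ptrace n d I (pure_state psi) = gram (cfg d I) (cfg d ({1..n} - I)) (bipart_matrix psi I)"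
  by (simp add: fun_eq_iff ptrace_def gram_def pure_state_def bipart_matrix_def)

lemma ptrace_pure_state_compl:
  assumes "I \<subseteq> {1..n}"
  shows "ptrace n d ({1..n} - I) (pure_state psi)
           = gram (cfg d ({1..n} - I)) (cfg d I) (\<lambda>z x. bipart_matrix psi I x z)"
proof -
  have "{1..n} - ({1..n} - I) = I" using assms by auto
  then show ?thesis
    by (auto simp: fun_eq_iff ptrace_def gram_def pure_state_def bipart_matrix_def merge_swap
        intro!: sum.cong)
qed

lemma supp_proj_compl_fixes_bipart_matrix:
  assumes "I \<subseteq> {1..n}" "x \<in> cfg d I" "z \<in> cfg d ({1..n} - I)"
  shows "(\<Sum>z'\<in>cfg d ({1..n} - I).
            supp_proj n d (pure_state psi) ({1..n} - I) z z' * bipart_matrix psi I x z')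
         = bipart_matrix psi I x z"
proof -
  have fin: "finite (cfg d I)" "finite (cfg d ({1..n} - I))"
    using assms(1) by (auto intro: finite_cfg finite_subset)
  have "is_orth_proj (cfg d ({1..n} - I))
      (col_span (cfg d ({1..n} - I)) (gram (cfg d ({1..n} - I)) (cfg d I) (\<lambda>z x. bipart_matrix psi I x z))
         (cfg d ({1..n} - I)))
      (supp_proj n d (pure_state psi) ({1..n} - I))"
    using is_orth_proj_supp_proj[of "{1..n} - I" d n "pure_state psi"] ptrace_pure_state_compl[OF assms(1)]
    by simp
  from is_orth_proj_gram_fixes_columns[OF fin(2,1) this assms(2,3)] show ?thesis .
qed

lemma supp_proj_column_in_range:
  assumes "finite I" "y \<in> cfg d I"
  shows "\<exists>\<alpha>. \<forall>b\<in>cfg d I.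
    supp_proj n d (pure_state psi) I b y = (\<Sum>z\<in>cfg d ({1..n} - I). bipart_matrix psi I b z * \<alpha> z)"
proof -
  let ?C = "cfg d I" and ?s = "supp_proj n d (pure_state psi) I"
  let ?W = "col_span ?C (gram ?C (cfg d ({1..n} - I)) (bipart_matrix psi I)) ?C"
  have "is_orth_proj ?C ?W ?s"
    using is_orth_proj_supp_proj[OF assms(1), of d n "pure_state psi"] by (simp add: ptrace_pure_state)
  then have "apply_on ?C ?s (basis_vec y) \<in> ?W"
    using assms(2) by (simp add: is_orth_proj_def basis_vec_in_vecs_on)
  then have col: "column ?C ?s y \<in> ?W"
    using assms by (simp add: apply_on_basis_vec finite_cfg)
  obtain \<alpha> where \<alpha>: "\<forall>b\<in>?C.
      column ?C ?s y b = (\<Sum>z\<in>cfg d ({1..n} - I). bipart_matrix psi I b z * \<alpha> z)"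
    using col_span_gram[OF col] by blast
  then show ?thesis by (intro exI[of _ \<alpha>]) (simp add: column_def)
qed

lemma restrict_op_outside:
  "x \<notin> cfg d I \<or> y \<notin> cfg d I \<Longrightarrow> restrict_op n d rho I B x y = 0"
  by (auto simp: restrict_op_def mmul_def)

lemma restrict_op_inside:
  assumes "x \<in> cfg d I" "y \<in> cfg d I"
  shows "restrict_op n d rho I B x y = (\<Sum>c\<in>cfg d I. \<Sum>e\<in>cfg d I.
    supp_proj n d rho I x c * B c e * supp_proj n d rho I e y)"
proof -
  have "restrict_op n d rho I B x y = (\<Sum>e\<in>cfg d I. \<Sum>c\<in>cfg d I.
      supp_proj n d rho I x c * B c e * supp_proj n d rho I e y)"
    using assms by (simp add: restrict_op_def mmul_def sum_distrib_right cong: sum.cong)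
  also have "\<dots> = (\<Sum>c\<in>cfg d I. \<Sum>e\<in>cfg d I.
      supp_proj n d rho I x c * B c e * supp_proj n d rho I e y)"
    by (rule sum.swap)
  finally show ?thesis .
qed

lemma restrict_op_idem:
  assumes "finite I"
  shows "restrict_op n d rho I (restrict_op n d rho I B) = restrict_op n d rho I B"
proof (intro ext)
  fix x y
  let ?C = "cfg d I" and ?s = "supp_proj n d rho I"
  have idem: "\<And>a b. (\<Sum>c\<in>?C. ?s a c * ?s c b) = ?s a b"
    using is_orth_proj_idem[OF finite_cfg[OF assms] is_orth_proj_supp_proj[OF assms]] .
  show "restrict_op n d rho I (restrict_op n d rho I B) x y = restrict_op n d rho I B x y"
  proof (cases "x \<in> ?C \<and> y \<in> ?C")
    case True
    then have "restrict_op n d rho I (restrict_op n d rho I B) x y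
        = (\<Sum>c\<in>?C. \<Sum>e\<in>?C. ?s x c * (\<Sum>a\<in>?C. \<Sum>b\<in>?C. ?s c a * B a b * ?s b e) * ?s e y)"
      by (simp add: restrict_op_inside cong: sum.cong)
    also have "\<dots> = (\<Sum>a\<in>?C. \<Sum>b\<in>?C. (\<Sum>c\<in>?C. ?s x c * ?s c a) * B a b * (\<Sum>e\<in>?C. ?s b e * ?s e y))"
      by (rule sum_sandwich_reassoc)
    also have "\<dots> = restrict_op n d rho I B x y"
      using True by (simp add: idem restrict_op_inside)
    finally show ?thesis .
  qed (auto simp: restrict_op_outside)
qed

lemma restrict_op_add:
  "restrict_op n d rho I (B1 + B2) = restrict_op n d rho I B1 + restrict_op n d rho I B2"
proof (intro ext)
  fix x y
  show "restrict_op n d rho I (B1 + B2) x y = (restrict_op n d rho I B1 + restrict_op n d rho I B2) x y"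
    by (cases "x \<in> cfg d I \<and> y \<in> cfg d I")
      (auto simp: restrict_op_inside restrict_op_outside ring_distribs sum.distrib)
qed

lemma restrict_op_scale:
  "restrict_op n d rho I (\<lambda>x y. c * B x y) = (\<lambda>x y. c * restrict_op n d rho I B x y)"
proof (intro ext)
  fix x y
  show "restrict_op n d rho I (\<lambda>x y. c * B x y) x y = c * restrict_op n d rho I B x y"
    by (cases "x \<in> cfg d I \<and> y \<in> cfg d I")
      (auto simp: restrict_op_inside restrict_op_outside sum_distrib_left mult_ac)
qed

definition transfer_op :: "(midx \<Rightarrow> complex) \<Rightarrow> (nat \<Rightarrow> nat) \<Rightarrow> nat set \<Rightarrow> nat set \<Rightarrow> op \<Rightarrow> op" where
  "transfer_op psi d I J A = (\<lambda>z w. if z \<in> cfg d J \<and> w \<in> cfg d J then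
     (\<Sum>x\<in>cfg d I. \<Sum>x'\<in>cfg d I. bipart_matrix psi I x z * A x' x * cnj (bipart_matrix psi I x' w))
     else 0)"

lemma transfer_op_in_ops: "transfer_op psi d I J A \<in> ops d J"
  by (simp add: transfer_op_def ops_def)

lemma transfer_op_add:
  "transfer_op psi d I J (A + B) = transfer_op psi d I J A + transfer_op psi d I J B"
  by (simp add: fun_eq_iff transfer_op_def ring_distribs sum.distrib)

lemma transfer_op_scale:
  "transfer_op psi d I J (\<lambda>x y. c * A x y) = (\<lambda>z w. c * transfer_op psi d I J A z w)"
  by (simp add: fun_eq_iff transfer_op_def sum_distrib_left mult_ac)

lemma transfer_op_pairing:
  "(\<Sum>z1\<in>cfg d J. \<Sum>z2\<in>cfg d J. a z1 * transfer_op psi d I J A z1 z2 * b z2)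
     = (\<Sum>x\<in>cfg d I. \<Sum>x'\<in>cfg d I. (\<Sum>z1\<in>cfg d J. a z1 * bipart_matrix psi I x z1) * A x' x
          * (\<Sum>z2\<in>cfg d J. cnj (bipart_matrix psi I x' z2) * b z2))"
proof -
  have "(\<Sum>z1\<in>cfg d J. \<Sum>z2\<in>cfg d J. a z1 * transfer_op psi d I J A z1 z2 * b z2)
      = (\<Sum>z1\<in>cfg d J. \<Sum>z2\<in>cfg d J. a z1 * (\<Sum>x\<in>cfg d I. \<Sum>x'\<in>cfg d I.
           bipart_matrix psi I x z1 * A x' x * cnj (bipart_matrix psi I x' z2)) * b z2)"
    by (simp add: transfer_op_def cong: sum.cong)
  also have "\<dots> = (\<Sum>x\<in>cfg d I. \<Sum>x'\<in>cfg d I. (\<Sum>z1\<in>cfg d J. a z1 * bipart_matrix psi I x z1) * A x' x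
      * (\<Sum>z2\<in>cfg d J. cnj (bipart_matrix psi I x' z2) * b z2))"
    by (rule sum_sandwich_reassoc)
  finally show ?thesis .
qed

lemma restrict_transfer_op:
  assumes "I \<subseteq> {1..n}"
  shows "restrict_op n d (pure_state psi) ({1..n} - I) (transfer_op psi d I ({1..n} - I) A)
           = transfer_op psi d I ({1..n} - I) A"
proof (intro ext)
  fix z w
  let ?J = "{1..n} - I"
  let ?CI = "cfg d I" and ?CJ = "cfg d ?J" and ?M = "bipart_matrix psi I"
  let ?s = "supp_proj n d (pure_state psi) ?J" and ?T = "transfer_op psi d I ?J A"
  have fin: "finite ?J" by simp
  have herm: "\<And>a b. ?s a b = cnj (?s b a)"
    by (rule is_orth_proj_hermitian[OF finite_cfg[OF fin] is_orth_proj_supp_proj[OF fin]])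
  have M_fixed: "\<And>x z. x \<in> ?CI \<Longrightarrow> z \<in> ?CJ \<Longrightarrow> (\<Sum>z'\<in>?CJ. ?s z z' * ?M x z') = ?M x z"
    using supp_proj_compl_fixes_bipart_matrix[OF assms] .
  show "restrict_op n d (pure_state psi) ?J ?T z w = ?T z w"
  proof (cases "z \<in> ?CJ \<and> w \<in> ?CJ")
    case True
    have "restrict_op n d (pure_state psi) ?J ?T z w
        = (\<Sum>z1\<in>?CJ. \<Sum>z2\<in>?CJ. ?s z z1 * ?T z1 z2 * ?s z2 w)"
      using True by (simp add: restrict_op_inside)
    also have "\<dots> = (\<Sum>x\<in>?CI. \<Sum>x'\<in>?CI.
        (\<Sum>z1\<in>?CJ. ?s z z1 * ?M x z1) * A x' x * (\<Sum>z2\<in>?CJ. cnj (?M x' z2) * ?s z2 w))"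
      by (rule transfer_op_pairing)
    also have "\<dots> = (\<Sum>x\<in>?CI. \<Sum>x'\<in>?CI. ?M x z * A x' x * cnj (?M x' w))"
    proof (intro sum.cong refl)
      fix x x' assume x: "x \<in> ?CI" and x': "x' \<in> ?CI"
      have "(\<Sum>z2\<in>?CJ. cnj (?M x' z2) * ?s z2 w) = cnj (\<Sum>z2\<in>?CJ. ?s w z2 * ?M x' z2)"
        by (subst herm) (simp add: mult.commute)
      also have "\<dots> = cnj (?M x' w)"
        using M_fixed[OF x'] True by (simp del: cnj_sum)
      finally show "(\<Sum>z1\<in>?CJ. ?s z z1 * ?M x z1) * A x' x * (\<Sum>z2\<in>?CJ. cnj (?M x' z2) * ?s z2 w)
          = ?M x z * A x' x * cnj (?M x' w)"
        using M_fixed[OF x] True by simp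
    qed
    also have "\<dots> = ?T z w" using True by (simp add: transfer_op_def)
    finally show ?thesis .
  qed (auto simp: restrict_op_outside transfer_op_def)
qed

lemma restrict_op_eq_0_if_transfer_op_eq_0:
  assumes "I \<subseteq> {1..n}"
    and T0: "transfer_op psi d I ({1..n} - I) (restrict_op n d (pure_state psi) I B) = (\<lambda>z w. 0)"
  shows "restrict_op n d (pure_state psi) I B = (\<lambda>x y. 0)"
proof (intro ext)
  fix x0 y0
  let ?J = "{1..n} - I"
  let ?CI = "cfg d I" and ?CJ = "cfg d ?J" and ?M = "bipart_matrix psi I"
  let ?s = "supp_proj n d (pure_state psi) I" and ?A = "restrict_op n d (pure_state psi) I B"
  have fin: "finite I" using assms(1) finite_subset by blast
  have herm: "\<And>a b. ?s a b = cnj (?s b a)"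
    by (rule is_orth_proj_hermitian[OF finite_cfg[OF fin] is_orth_proj_supp_proj[OF fin]])
  show "?A x0 y0 = 0"
  proof (cases "x0 \<in> ?CI \<and> y0 \<in> ?CI")
    case True
    then have x0: "x0 \<in> ?CI" and y0: "y0 \<in> ?CI" by simp_all
    obtain \<alpha> where \<alpha>: "\<forall>b\<in>?CI. ?s b y0 = (\<Sum>z\<in>?CJ. ?M b z * \<alpha> z)"
      using supp_proj_column_in_range[OF fin y0, of n psi] by blast
    obtain \<beta> where \<beta>: "\<forall>b\<in>?CI. ?s b x0 = (\<Sum>z\<in>?CJ. ?M b z * \<beta> z)"
      using supp_proj_column_in_range[OF fin x0, of n psi] by blast
    have "?A x0 y0 = (\<Sum>c\<in>?CI. \<Sum>e\<in>?CI. ?s x0 c * ?A c e * ?s e y0)"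
      using restrict_op_inside[OF x0 y0, of n "pure_state psi" ?A] by (simp add: restrict_op_idem[OF fin])
    also have "\<dots> = (\<Sum>x\<in>?CI. \<Sum>x'\<in>?CI. ?s x0 x' * ?A x' x * ?s x y0)"
      by (rule sum.swap)
    also have "\<dots> = (\<Sum>x\<in>?CI. \<Sum>x'\<in>?CI.
        (\<Sum>z1\<in>?CJ. \<alpha> z1 * ?M x z1) * ?A x' x * (\<Sum>z2\<in>?CJ. cnj (?M x' z2) * cnj (\<beta> z2)))"
    proof (intro sum.cong refl)
      fix x x' assume x: "x \<in> ?CI" and x': "x' \<in> ?CI"
      have "?s x0 x' = cnj (?s x' x0)" by (rule herm)
      then have "?s x0 x' = (\<Sum>z2\<in>?CJ. cnj (?M x' z2) * cnj (\<beta> z2))"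
        using \<beta> x' by simp
      moreover have "?s x y0 = (\<Sum>z1\<in>?CJ. \<alpha> z1 * ?M x z1)"
        using \<alpha> x by (simp add: mult.commute)
      ultimately show "?s x0 x' * ?A x' x * ?s x y0
          = (\<Sum>z1\<in>?CJ. \<alpha> z1 * ?M x z1) * ?A x' x * (\<Sum>z2\<in>?CJ. cnj (?M x' z2) * cnj (\<beta> z2))"
        by simp
    qed
    also have "\<dots> = (\<Sum>z1\<in>?CJ. \<Sum>z2\<in>?CJ. \<alpha> z1 * transfer_op psi d I ?J ?A z1 z2 * cnj (\<beta> z2))"
      by (rule transfer_op_pairing[symmetric])
    also have "\<dots> = 0"
      by (simp only: T0) simp
    finally show ?thesis .
  qed (auto simp: restrict_op_outside)
qed

section \<open>Dimensions of the spaces of entanglement forms\<close>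

lemma (in vector_space_pair) dim_le_dim_if_inj_on:
  assumes f: "Vector_Spaces.linear s1 s2 f" and S: "vs1.subspace S" and inj: "inj_on f S" and "f ` S \<subseteq> T"
    and T: "T \<subseteq> vs2.span W" "finite W"
  shows "vs1.dim S \<le> vs2.dim T"
proof -
  obtain B where B: "B \<subseteq> S" "vs1.independent B" "S \<subseteq> vs1.span B" "card B = vs1.dim S"
    by (rule vs1.basis_exists)
  have "vs1.span B \<subseteq> S" using B(1) S by (rule vs1.span_minimal)
  then have inj_B: "inj_on f (vs1.span B)" by (rule inj_on_subset[OF inj])
  have indep: "vs2.independent (f ` B)"
    by (rule linear_independent_injective_image[OF f B(2) inj_B])
  have "f ` B \<subseteq> T" using B(1) \<open>f ` S \<subseteq> T\<close> by blast
  then obtain B' where B': "f ` B \<subseteq> B'" "B' \<subseteq> T" "vs2.independent B'" "T \<subseteq> vs2.span B'"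
    using indep by (rule vs2.maximal_independent_subset_extend)
  have "B' \<subseteq> vs2.span W" using B'(2) T(1) by (rule order_trans)
  then have "finite B'" using vs2.independent_span_bound[OF T(2) B'(3)] by simp
  have "vs1.dim S = card (f ` B)"
    using B(4) card_image[OF inj_on_subset[OF inj_B vs1.span_superset]] by simp
  also have "\<dots> \<le> card B'" using card_mono[OF \<open>finite B'\<close> B'(1)] .
  also have "\<dots> = vs2.dim T" using vs2.basis_card_eq_dim[OF B'(2,4,3)] .
  finally show ?thesis .
qed

lemma vector_space_cscale: "vector_space cscale"
  by unfold_locales (simp_all add: cscale_def fun_eq_iff algebra_simps)

interpretation forms: vector_space cscale
  by (rule vector_space_cscale)

lemma OmegaI:
  assumes "\<And>I. I \<subseteq> {1..n} \<Longrightarrow> card I = k \<Longrightarrow> \<exists>B\<in>ops d I. F I = restrict_op n d rho I B"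
    and "\<And>I. \<not> (I \<subseteq> {1..n} \<and> card I = k) \<Longrightarrow> F I = (\<lambda>x y. 0)"
  shows "F \<in> Omega n d rho k"
  using assms unfolding Omega_def by blast

lemma Omega_restrictD:
  "F \<in> Omega n d rho k \<Longrightarrow> I \<subseteq> {1..n} \<Longrightarrow> card I = k \<Longrightarrow> \<exists>B\<in>ops d I. F I = restrict_op n d rho I B"
  unfolding Omega_def by blast

lemma Omega_zeroD:
  "F \<in> Omega n d rho k \<Longrightarrow> \<not> (I \<subseteq> {1..n} \<and> card I = k) \<Longrightarrow> F I = (\<lambda>x y. 0)"
  unfolding Omega_def by blast

lemma subspace_Omega: "forms.subspace (Omega n d rho k)"
  unfolding forms.subspace_def
proof (intro conjI ballI allI)
  have "restrict_op n d rho I (\<lambda>x y. 0) = 0" for I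
    using restrict_op_scale[of n d rho I 0 "\<lambda>x y. 0"] by (simp add: zero_fun_def)
  moreover have "(\<lambda>x y. 0) \<in> ops d I" for I by (simp add: ops_def)
  ultimately show "0 \<in> Omega n d rho k"
    by (intro OmegaI bexI[of _ "\<lambda>x y. 0"]) (simp_all add: zero_fun_def)
next
  fix F G assume F: "F \<in> Omega n d rho k" and G: "G \<in> Omega n d rho k"
  show "F + G \<in> Omega n d rho k"
  proof (rule OmegaI)
    fix I assume I: "I \<subseteq> {1..n}" "card I = k"
    obtain B1 B2 where "B1 \<in> ops d I" "F I = restrict_op n d rho I B1"
      and "B2 \<in> ops d I" "G I = restrict_op n d rho I B2"
      using Omega_restrictD[OF F I] Omega_restrictD[OF G I] by blast
    then have "B1 + B2 \<in> ops d I" "(F + G) I = restrict_op n d rho I (B1 + B2)"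
      by (auto simp: ops_def restrict_op_add)
    then show "\<exists>B\<in>ops d I. (F + G) I = restrict_op n d rho I B" by blast
  qed (simp add: Omega_zeroD[OF F] Omega_zeroD[OF G] fun_eq_iff)
next
  fix c F assume F: "F \<in> Omega n d rho k"
  show "cscale c F \<in> Omega n d rho k"
  proof (rule OmegaI)
    fix I assume I: "I \<subseteq> {1..n}" "card I = k"
    obtain B where "B \<in> ops d I" "F I = restrict_op n d rho I B"
      using Omega_restrictD[OF F I] by blast
    then have "(\<lambda>x y. c * B x y) \<in> ops d I" "cscale c F I = restrict_op n d rho I (\<lambda>x y. c * B x y)"
      by (auto simp: ops_def cscale_def restrict_op_scale)
    then show "\<exists>B\<in>ops d I. cscale c F I = restrict_op n d rho I B" by blast
  qed (simp add: Omega_zeroD[OF F] cscale_def)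
qed

definition matrix_unit :: "nat set \<Rightarrow> midx \<Rightarrow> midx \<Rightarrow> nat set \<Rightarrow> op" where
  "matrix_unit I x y = (\<lambda>I' a b. if I' = I \<and> a = x \<and> b = y then 1 else 0)"

lemma sum_fun_apply: "(sum f A) x = (\<Sum>a\<in>A. f a x)"
  by (induction A rule: infinite_finite_induct) simp_all

lemma in_span_matrix_units:
  assumes "finite S" and supp: "\<And>I x y. F I x y \<noteq> 0 \<Longrightarrow> (I, x, y) \<in> S"
  shows "F \<in> forms.span ((\<lambda>(I, x, y). matrix_unit I x y) ` S)"
proof -
  have "F = (\<Sum>(I, x, y)\<in>S. cscale (F I x y) (matrix_unit I x y))"
  proof (intro ext)
    fix I a b
    have "(\<Sum>(I, x, y)\<in>S. cscale (F I x y) (matrix_unit I x y)) I a b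
        = (\<Sum>p\<in>S. if p = (I, a, b) then F I a b else 0)"
      by (auto simp: sum_fun_apply cscale_def matrix_unit_def split_beta intro!: sum.cong)
    also have "\<dots> = F I a b" using assms by (auto simp: sum.delta)
    finally show "F I a b = (\<Sum>(I, x, y)\<in>S. cscale (F I x y) (matrix_unit I x y)) I a b" by simp
  qed
  also have "\<dots> \<in> forms.span ((\<lambda>(I, x, y). matrix_unit I x y) ` S)"
    by (intro forms.span_sum) (auto intro!: forms.span_scale[OF forms.span_base] rev_image_eqI)
  finally show ?thesis .
qed

lemma Omega_support:
  assumes "F \<in> Omega n d rho k" "F I x y \<noteq> 0"
  shows "(I, x, y) \<in> (SIGMA I:Pow {1..n}. cfg d I \<times> cfg d I)"
proof (cases "I \<subseteq> {1..n} \<and> card I = k")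
  case True
  then obtain B where "F I = restrict_op n d rho I B" using Omega_restrictD[OF assms(1)] by blast
  then show ?thesis using True assms(2) restrict_op_outside by fastforce
qed (use Omega_zeroD[OF assms(1)] assms(2) in auto)

lemma Omega_subset_span:
  "Omega n d rho k \<subseteq> forms.span ((\<lambda>(I, x, y). matrix_unit I x y) ` (SIGMA I:Pow {1..n}. cfg d I \<times> cfg d I))"
proof
  have "finite (SIGMA I:Pow {1..n}. cfg d I \<times> cfg d I)"
    by (auto intro!: finite_SigmaI finite_cfg intro: finite_subset)
  then show "F \<in> forms.span ((\<lambda>(I, x, y). matrix_unit I x y) ` (SIGMA I:Pow {1..n}. cfg d I \<times> cfg d I))"
    if "F \<in> Omega n d rho k" for F
    using in_span_matrix_units Omega_support[OF that] by blast
qed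

definition transfer_forms :: "nat \<Rightarrow> (nat \<Rightarrow> nat) \<Rightarrow> (midx \<Rightarrow> complex) \<Rightarrow> nat \<Rightarrow> (nat set \<Rightarrow> op) \<Rightarrow> nat set \<Rightarrow> op" where
  "transfer_forms n d psi k F = (\<lambda>J. if J \<subseteq> {1..n} \<and> card J = n - k
     then transfer_op psi d ({1..n} - J) J (F ({1..n} - J)) else (\<lambda>x y. 0))"

lemma linear_transfer_forms: "Vector_Spaces.linear cscale cscale (transfer_forms n d psi k)"
  unfolding Vector_Spaces.linear_iff
  by (simp add: vector_space_cscale fun_eq_iff transfer_forms_def transfer_op_add cscale_def
      transfer_op_scale[unfolded fun_eq_iff, rule_format, symmetric])

lemma transfer_forms_in_Omega:
  assumes "k \<le> n" "F \<in> Omega n d (pure_state psi) k"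
  shows "transfer_forms n d psi k F \<in> Omega n d (pure_state psi) (n - k)"
proof (rule OmegaI)
  fix J assume J: "J \<subseteq> {1..n}" "card J = n - k"
  have "J = {1..n} - ({1..n} - J)" using J(1) by blast
  then have "restrict_op n d (pure_state psi) J (transfer_op psi d ({1..n} - J) J (F ({1..n} - J)))
      = transfer_op psi d ({1..n} - J) J (F ({1..n} - J))"
    using restrict_transfer_op[of "{1..n} - J" n d psi] by simp
  moreover have "transfer_forms n d psi k F J = transfer_op psi d ({1..n} - J) J (F ({1..n} - J))"
    using J by (simp add: transfer_forms_def)
  ultimately show "\<exists>B\<in>ops d J. transfer_forms n d psi k F J = restrict_op n d (pure_state psi) J B"
    using transfer_op_in_ops by metis
qed (auto simp: transfer_forms_def)

lemma inj_on_transfer_forms: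
  assumes "k \<le> n"
  shows "inj_on (transfer_forms n d psi k) (Omega n d (pure_state psi) k)"
proof -
  interpret vector_space_pair cscale cscale by unfold_locales
  have "F = 0" if F: "F \<in> Omega n d (pure_state psi) k" and F0: "transfer_forms n d psi k F = 0" for F
  proof (rule ext)
    fix I
    show "F I = 0 I"
    proof (cases "I \<subseteq> {1..n} \<and> card I = k")
      case True
      then obtain B where B: "F I = restrict_op n d (pure_state psi) I B"
        using Omega_restrictD[OF F] by blast
      have fin: "finite I" using True finite_subset by blast
      have "card ({1..n} - I) = n - k" "{1..n} - ({1..n} - I) = I"
        using True by (auto simp: card_Diff_subset[OF fin])
      then have "transfer_op psi d I ({1..n} - I) (F I) = transfer_forms n d psi k F ({1..n} - I)"
        by (simp add: transfer_forms_def)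
      then have "transfer_op psi d I ({1..n} - I) (restrict_op n d (pure_state psi) I B) = (\<lambda>z w. 0)"
        by (simp add: F0 B zero_fun_def)
      then show ?thesis
        using restrict_op_eq_0_if_transfer_op_eq_0 True B by (simp add: zero_fun_def)
    qed (simp add: Omega_zeroD[OF F] zero_fun_def)
  qed
  then show ?thesis
    using linear_inj_on_iff_eq_0[OF linear_transfer_forms subspace_Omega] by blast
qed

lemma cdim_Omega_le:
  assumes "k \<le> n"
  shows "cdim (Omega n d (pure_state psi) k) \<le> cdim (Omega n d (pure_state psi) (n - k))"
proof -
  interpret vector_space_pair cscale cscale
    by unfold_locales
  show ?thesis
    unfolding cdim_def
  proof (rule dim_le_dim_if_inj_on[OF linear_transfer_forms subspace_Omega inj_on_transfer_forms[OF assms]])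
    show "transfer_forms n d psi k ` Omega n d (pure_state psi) k \<subseteq> Omega n d (pure_state psi) (n - k)"
      using transfer_forms_in_Omega[OF assms] by blast
    show "Omega n d (pure_state psi) (n - k)
        \<subseteq> forms.span ((\<lambda>(I, x, y). matrix_unit I x y) ` (SIGMA I:Pow {1..n}. cfg d I \<times> cfg d I))"
      by (rule Omega_subset_span)
    show "finite ((\<lambda>(I, x, y). matrix_unit I x y) ` (SIGMA I:Pow {1..n}. cfg d I \<times> cfg d I))"
      by (auto intro!: finite_SigmaI finite_cfg intro: finite_subset)
  qed
qed

theorem corollary1:
  fixes n :: nat and d :: "nat \<Rightarrow> nat" and psi :: "midx \<Rightarrow> complex" and k :: nat
  assumes "psi \<in> vecs d {1..n}"
    and "(\<Sum>x\<in>cfg d {1..n}. (cmod (psi x))\<^sup>2) = 1"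
    and "1 \<le> k" and "k \<le> n - 1"
  shows "cdim (Omega n d (pure_state psi) k) = cdim (Omega n d (pure_state psi) (n - k))"
proof -
  have "k \<le> n" using assms(4) by simp
  then have "cdim (Omega n d (pure_state psi) (n - k)) \<le> cdim (Omega n d (pure_state psi) k)"
    using cdim_Omega_le[of "n - k" n d psi] by simp
  with cdim_Omega_le[OF \<open>k \<le> n\<close>, of d psi] show ?thesis by (rule antisym)
qed

end
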